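(* Let $\alpha\in\mathbb{N}=\{0,1,2,\dots\}$ and let $m$ be a positive odd integer with $m>4\alpha+2$. Let $\mathbb{S}=\langle 4,4\alpha+2,m\rangle$. Then the set of Betti elements of $\mathbb{S}$ is $Betti(\mathbb{S})=\{8\alpha+4,\,2m\}$.
   Context: $\mathbb{N}$ denotes the set of nonnegative integers. For positive integers $a_1,\dots,a_e$ with $\gcd=1$, $\langle a_1,\dots,a_e\rangle=\{\lambda_1a_1+\dots+\lambda_ea_e:\lambda_i\in\mathbb{N}\}$ is a numerical semigroup. For $a\in\mathbb{S}$, the set of factorizations of $a$ with respect to the listed generators is $Z(a)=\{(\eta_1,\dots,\eta_e)\in\mathbb{N}^e:\eta_1a_1+\dots+\eta_ea_e=a\}$. For $x,y\in\mathbb{N}^e$, $\gcd\{x,y\}$ is the componentwise minimum. For $a\in\mathbb{S}\setminus\{0\}$, let $\nabla_a$ be the graph with vertex set $Z(a)$ in which $x,y$ are joined by an edge if $\gcd\{x,y\}\neq 0$. The element $a$ is a Betti element of $\mathbb{S}$ if $\nabla_a$ is disconnected; $Betti(\mathbb{S})$ denotes the set of Betti elements. *)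

theory Defs
  imports Main
begin

definition semigroup_gen :: "nat list \<Rightarrow> nat set" where
  "semigroup_gen gens = {a. \<exists>x::nat list. length x = length gens \<and>
                              (\<Sum>i<length gens. x ! i * gens ! i) = a}"

definition factorizations :: "nat list \<Rightarrow> nat \<Rightarrow> nat list set" where
  "factorizations gens a = {x. length x = length gens \<and>
                              (\<Sum>i<length gens. x ! i * gens ! i) = a}"

definition gcd_nonzero :: "nat list \<Rightarrow> nat list \<Rightarrow> bool" where
  "gcd_nonzero x y \<longleftrightarrow> (\<exists>i < min (length x) (length y). min (x ! i) (y ! i) \<noteq> 0)"

definition nabla_edges :: "nat list \<Rightarrow> nat \<Rightarrow> (nat list \<times> nat list) set" where
  "nabla_edges gens a = {(x, y). x \<in> factorizations gens a \<and> y \<in> factorizations gens a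
                                 \<and> gcd_nonzero x y}"

definition nabla_connected :: "nat list \<Rightarrow> nat \<Rightarrow> bool" where
  "nabla_connected gens a \<longleftrightarrow>
     (\<forall>x \<in> factorizations gens a. \<forall>y \<in> factorizations gens a.
        (x, y) \<in> (nabla_edges gens a)\<^sup>*)"

definition Betti :: "nat list \<Rightarrow> nat set" where
  "Betti gens = {a \<in> semigroup_gen gens. a \<noteq> 0 \<and> \<not> nabla_connected gens a}"

end

theory Submission
  imports Defs
begin

(* Write k = 2 alpha + 1 and m = k + 2 d, so the generators are 4, 2k, m with k, m odd.
  A factorization [p, q, r] can be reduced by the trades [0,2,0] -> [k,0,0] and
  [0,0,2] -> [d,1,0]; the reduced factorization shares a nonzero entry with the old one
  unless the old one is exactly [0,2,0] (value 4k) or [0,0,2] (value 2m).  Reduction ends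
  in a factorization with q, r < 2, and this one is unique because the parities of r and
  then of q are determined by the value.  So for every other value all factorizations are
  joined to the same reduced one.  For 4k and 2m, the factorizations [0,2,0] and [0,0,2]
  are isolated vertices of the graph. *)

lemma factorizations_3:
  "x \<in> factorizations [a, b, c] s \<longleftrightarrow> (\<exists>p q r. x = [p, q, r] \<and> a * p + b * q + c * r = s)"
proof
  assume x: "x \<in> factorizations [a, b, c] s"
  then have "length x = 3"
    by (simp add: factorizations_def)
  then have "x = [x ! 0, x ! 1, x ! 2]"
    by (cases x; cases "tl x"; cases "tl (tl x)") (auto simp: numeral_3_eq_3)
  moreover have "a * x ! 0 + b * x ! 1 + c * x ! 2 = s"
    using x
    by (simp add: factorizations_def numeral_3_eq_3 numeral_2_eq_2 lessThan_Suc algebra_simps)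
  ultimately show "\<exists>p q r. x = [p, q, r] \<and> a * p + b * q + c * r = s"
    by blast
qed (auto simp: factorizations_def numeral_3_eq_3 lessThan_Suc algebra_simps)

lemma Cons_3_in_factorizations [simp]:
  "[p, q, r] \<in> factorizations [a, b, c] s \<longleftrightarrow> a * p + b * q + c * r = s"
  by (simp add: factorizations_3)

lemma gcd_nonzero_3 [simp]:
  "gcd_nonzero [p, q, r] [p', q', r'] \<longleftrightarrow>
     (p \<noteq> 0 \<and> p' \<noteq> 0) \<or> (q \<noteq> 0 \<and> q' \<noteq> 0) \<or> (r \<noteq> 0 \<and> r' \<noteq> 0)"
  by (auto simp: gcd_nonzero_def numeral_3_eq_3 less_Suc_eq)

lemma semigroup_genI: "x \<in> factorizations gens s \<Longrightarrow> s \<in> semigroup_gen gens"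
  unfolding semigroup_gen_def factorizations_def by auto

lemma sym_nabla_edges: "sym (nabla_edges gens a)"
  by (auto simp: sym_def nabla_edges_def gcd_nonzero_def min.commute)

lemma not_nabla_connected_if_isolated:
  assumes "x \<in> factorizations gens a" "y \<in> factorizations gens a" "x \<noteq> y"
    and isolated: "\<And>z. z \<in> factorizations gens a \<Longrightarrow> gcd_nonzero x z \<Longrightarrow> z = x"
  shows "\<not> nabla_connected gens a"
proof
  assume "nabla_connected gens a"
  then have "(x, y) \<in> (nabla_edges gens a)\<^sup>*"
    using assms(1,2) by (simp add: nabla_connected_def)
  then have "y = x"
    by (induction rule: rtrancl_induct) (auto simp: nabla_edges_def intro: isolated)
  with \<open>x \<noteq> y\<close> show False
    by simp
qed

lemma even_third_coordinate_iff:
  assumes "odd k" "4 * p + 2 * k * q + (k + 2 * d) * r = s"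
  shows "even r \<longleftrightarrow> even s"
  using assms by auto

lemma trade_third_adjacent:
  assumes "4 * p + 2 * k * q + (k + 2 * d) * (r + 2) = s" "s \<noteq> 2 * (k + 2 * d)"
  shows "([p, q, r + 2], [p + d, q + 1, r]) \<in> nabla_edges [4, 2 * k, k + 2 * d] s"
proof -
  have "p \<noteq> 0 \<or> q \<noteq> 0 \<or> r \<noteq> 0"
    using assms by auto
  then show ?thesis
    using assms(1) by (auto simp: nabla_edges_def algebra_simps)
qed

lemma trade_second_adjacent:
  assumes "4 * p + 2 * k * (q + 2) + (k + 2 * d) * r = s" "s \<noteq> 4 * k"
  shows "([p, q + 2, r], [p + k, q, r]) \<in> nabla_edges [4, 2 * k, k + 2 * d] s"
proof -
  have "p \<noteq> 0 \<or> q \<noteq> 0 \<or> r \<noteq> 0"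
    using assms by auto
  then show ?thesis
    using assms(1) by (auto simp: nabla_edges_def algebra_simps)
qed

lemma reachable_reduced_factorization:
  assumes "[p, q, r] \<in> factorizations [4, 2 * k, k + 2 * d] s"
    and "s \<noteq> 4 * k" "s \<noteq> 2 * (k + 2 * d)"
  shows "\<exists>p' q' r'. q' < 2 \<and> r' < 2 \<and> [p', q', r'] \<in> factorizations [4, 2 * k, k + 2 * d] s
           \<and> ([p, q, r], [p', q', r']) \<in> (nabla_edges [4, 2 * k, k + 2 * d] s)\<^sup>*"
  using assms(1)
proof (induction "q + 2 * r" arbitrary: p q r rule: less_induct)
  case less
  consider (third) r' where "r = r' + 2" | (second) q' where "r < 2" "q = q' + 2"
    | (reduced) "q < 2" "r < 2"
    by (metis add.commute le_Suc_ex not_less)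
  then show ?case
  proof cases
    case third
    have "4 * p + 2 * k * q + (k + 2 * d) * (r' + 2) = s"
      using less.prems third by simp
    then have "([p, q, r], [p + d, q + 1, r']) \<in> nabla_edges [4, 2 * k, k + 2 * d] s"
      using trade_third_adjacent assms(3) third by blast
    moreover have "[p + d, q + 1, r'] \<in> factorizations [4, 2 * k, k + 2 * d] s"
      using less.prems third by (simp add: algebra_simps)
    ultimately show ?thesis
      using less.hyps[of "q + 1" r' "p + d"] third by (auto intro: converse_rtrancl_into_rtrancl)
  next
    case second
    have "4 * p + 2 * k * (q' + 2) + (k + 2 * d) * r = s"
      using less.prems second by simp
    then have "([p, q, r], [p + k, q', r]) \<in> nabla_edges [4, 2 * k, k + 2 * d] s"
      using trade_second_adjacent assms(2) second by blast
    moreover have "[p + k, q', r] \<in> factorizations [4, 2 * k, k + 2 * d] s"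
      using less.prems second by (simp add: algebra_simps)
    ultimately show ?thesis
      using less.hyps[of q' r "p + k"] second by (auto intro: converse_rtrancl_into_rtrancl)
  next
    case reduced
    then show ?thesis
      using less.prems by blast
  qed
qed

lemma reduced_factorization_unique:
  assumes "odd k" and "q < 2" "r < 2" "q' < 2" "r' < 2"
    and x: "[p, q, r] \<in> factorizations [4, 2 * k, k + 2 * d] s"
    and y: "[p', q', r'] \<in> factorizations [4, 2 * k, k + 2 * d] s"
  shows "[p, q, r] = [p', q', r']"
proof -
  have "even r \<longleftrightarrow> even r'"
    using even_third_coordinate_iff[of k p q d r s] even_third_coordinate_iff[of k p' q' d r' s]
      assms by simp
  with \<open>r < 2\<close> \<open>r' < 2\<close> have "r = r'"
    by presburger
  with x y have "2 * p + k * q = 2 * p' + k * q'"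
    by simp
  moreover have "q \<in> {0, 1}" "q' \<in> {0, 1}"
    using assms by auto
  ultimately have "q = q'"
    using \<open>odd k\<close> by auto presburger+
  with x y \<open>r = r'\<close> show ?thesis
    by simp
qed

lemma nabla_connected_4_2k:
  assumes "odd k" "s \<noteq> 4 * k" "s \<noteq> 2 * (k + 2 * d)"
  shows "nabla_connected [4, 2 * k, k + 2 * d] s"
  unfolding nabla_connected_def
proof (intro ballI)
  let ?gens = "[4, 2 * k, k + 2 * d]"
  fix x y
  assume "x \<in> factorizations ?gens s" "y \<in> factorizations ?gens s"
  then obtain p q r p' q' r' where x: "x = [p, q, r]" "[p, q, r] \<in> factorizations ?gens s"
    and y: "y = [p', q', r']" "[p', q', r'] \<in> factorizations ?gens s"
    by (metis factorizations_3)
  obtain u where u: "u \<in> factorizations ?gens s" "(x, u) \<in> (nabla_edges ?gens s)\<^sup>*"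
    "\<exists>p q r. u = [p, q, r] \<and> q < 2 \<and> r < 2"
    using reachable_reduced_factorization[OF x(2) assms(2,3)] x(1) by blast
  obtain v where v: "v \<in> factorizations ?gens s" "(y, v) \<in> (nabla_edges ?gens s)\<^sup>*"
    "\<exists>p q r. v = [p, q, r] \<and> q < 2 \<and> r < 2"
    using reachable_reduced_factorization[OF y(2) assms(2,3)] y(1) by blast
  have "u = v"
    using u(1,3) v(1,3) reduced_factorization_unique[OF assms(1)] by blast
  moreover have "(v, y) \<in> (nabla_edges ?gens s)\<^sup>*"
    using v(2) sym_rtrancl[OF sym_nabla_edges] by (auto dest: symD)
  ultimately show "(x, y) \<in> (nabla_edges ?gens s)\<^sup>*"
    using u(2) by simp
qed

lemma not_nabla_connected_4_2k_at_4k: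
  assumes "odd k" "k < 2 * d"
  shows "\<not> nabla_connected [4, 2 * k, k + 2 * d] (4 * k)"
proof (rule not_nabla_connected_if_isolated)
  show "[0, 2, 0] \<in> factorizations [4, 2 * k, k + 2 * d] (4 * k)"
    "[k, 0, 0] \<in> factorizations [4, 2 * k, k + 2 * d] (4 * k)"
    by simp_all
  show "[0, 2, 0] \<noteq> [k, 0, 0]"
    by simp
  fix z
  assume "z \<in> factorizations [4, 2 * k, k + 2 * d] (4 * k)" "gcd_nonzero [0, 2, 0] z"
  then obtain p q r where z: "z = [p, q, r]" "4 * p + 2 * k * q + (k + 2 * d) * r = 4 * k"
    and "q > 0"
    by (auto simp: factorizations_3)
  have "r = 0"
  proof (rule ccontr)
    assume "r \<noteq> 0"
    with z(2) even_third_coordinate_iff[OF assms(1) z(2)] have "r \<ge> 2"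
      by presburger
    then have "2 * k + 4 * d \<le> (k + 2 * d) * r"
      using mult_le_mono2[of 2 r "k + 2 * d"] by simp
    with z(2) assms(2) show False
      by linarith
  qed
  have "q = 2"
  proof (rule ccontr)
    assume "q \<noteq> 2"
    with \<open>q > 0\<close> consider "q = 1" | "q \<ge> 3"
      by linarith
    then show False
    proof cases
      case 1
      with z(2) \<open>r = 0\<close> have "2 * p + k = 2 * k"
        by simp
      with assms(1) show False
        by presburger
    next
      case 2
      then have "2 * k * 3 \<le> 2 * k * q"
        by (rule mult_le_mono2)
      with z(2) assms(1) show False
        by (cases k) auto
    qed
  qed
  with z \<open>r = 0\<close> show "z = [0, 2, 0]"
    by simp
qed

lemma not_nabla_connected_4_2k_at_2m:
  assumes "odd k"
  shows "\<not> nabla_connected [4, 2 * k, k + 2 * d] (2 * (k + 2 * d))"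
proof (rule not_nabla_connected_if_isolated)
  show "[0, 0, 2] \<in> factorizations [4, 2 * k, k + 2 * d] (2 * (k + 2 * d))"
    "[d, 1, 0] \<in> factorizations [4, 2 * k, k + 2 * d] (2 * (k + 2 * d))"
    by simp_all
  show "[0, 0, 2] \<noteq> [d, 1, 0]"
    by simp
  fix z
  assume "z \<in> factorizations [4, 2 * k, k + 2 * d] (2 * (k + 2 * d))" "gcd_nonzero [0, 0, 2] z"
  then obtain p q r where z: "z = [p, q, r]" "4 * p + 2 * k * q + (k + 2 * d) * r = 2 * (k + 2 * d)"
    and "r > 0"
    by (auto simp: factorizations_3)
  with even_third_coordinate_iff[OF assms z(2)] have "r \<ge> 2"
    by presburger
  moreover have "(k + 2 * d) * r \<le> (k + 2 * d) * 2"
    using z(2) by linarith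
  ultimately have "r = 2"
    using odd_pos[OF assms] by (metis le_antisym mult_le_cancel1 add_gr_0)
  with z(2) have "p = 0" "q = 0"
    using odd_pos[OF assms] by auto
  with z(1) \<open>r = 2\<close> show "z = [0, 0, 2]"
    by simp
qed

lemma Betti_4_2k:
  assumes "odd k" "k < 2 * d"
  shows "Betti [4, 2 * k, k + 2 * d] = {4 * k, 2 * (k + 2 * d)}"
proof -
  have "4 * k \<in> semigroup_gen [4, 2 * k, k + 2 * d]"
    by (rule semigroup_genI[of "[k, 0, 0]"]) simp
  moreover have "2 * (k + 2 * d) \<in> semigroup_gen [4, 2 * k, k + 2 * d]"
    by (rule semigroup_genI[of "[0, 0, 2]"]) simp
  moreover have "k \<noteq> 0"
    using odd_pos[OF assms(1)] by simp
  ultimately show ?thesis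
    using nabla_connected_4_2k[OF assms(1)] not_nabla_connected_4_2k_at_4k[OF assms]
      not_nabla_connected_4_2k_at_2m[OF assms(1)]
    unfolding Betti_def by auto
qed

theorem theorem3:
  fixes \<alpha> m :: nat
  assumes "m > 0" and "odd m" and "m > 4 * \<alpha> + 2"
  shows "Betti [4, 4 * \<alpha> + 2, m] = {8 * \<alpha> + 4, 2 * m}"
proof -
  define k where "k = 2 * \<alpha> + 1"
  define d where "d = (m - k) div 2"
  have "m = k + 2 * d"
    unfolding d_def k_def using assms by presburger
  moreover have "odd k" "k < 2 * d"
    using assms \<open>m = k + 2 * d\<close> unfolding k_def by auto
  ultimately show ?thesis
    using Betti_4_2k[of k d] unfolding k_def by (simp add: algebra_simps)
qed

end
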